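(* Let $D\ge2$. (a) There exist constants $c,C'>0$ depending only on $D$ such that: if $0<\varepsilon<c$, $\Phi:\mathbb R^D\to\mathbb R^D$ is an $\varepsilon$-distorted diffeomorphism, $z\in\mathbb R^D$ and $r>0$, then there exists a Euclidean motion $A$ such that $|\Phi(x)-A(x)|\leq C'\varepsilon r$ for all $x\in B(z,r)$, and moreover $A$ is proper if and only if $\Phi$ is proper. (b) There exist constants $c_0,c'>0$ depending only on $D$ such that: let $0<\delta<c_0$, let $\Phi:\mathbb R^D\to\mathbb R^D$ be a $\delta$-distorted diffeomorphism, let $0<\eta<1$ and let $x_0,\dots,x_D\in\mathbb R^D$ with $\mathrm{diam}\{x_0,\dots,x_D\}\leq 1$ and $V_D(x_0,\dots,x_D)\geq\eta^D$, and suppose $0<\delta<c'\eta^D$. Let $T$ be the unique affine map with $T(x_i)=\Phi(x_i)$ for $i=0,\dots,D$. Then $\Phi$ is proper if and only if $T$ is proper.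
   Context: $B(z,r)$ is the open ball of center $z$ and radius $r$. A Euclidean motion is $x\mapsto Tx+x_0$ with $T\in O(D)$; proper if $\det T=1$. An affine map $x\mapsto Lx+b$ is proper if $\det L>0$. An $\varepsilon$-distorted diffeomorphism is a diffeomorphism $\Phi$ of $\mathbb R^D$ onto $\mathbb R^D$ with $(1+\varepsilon)^{-1}I\leq(\nabla\Phi(x))^T\nabla\Phi(x)\leq(1+\varepsilon)I$ for all $x$; it is proper if $\det\nabla\Phi>0$ everywhere and improper if $\det\nabla\Phi<0$ everywhere. $V_D(x_0,\dots,x_D)$ is the $D$-dimensional volume of the simplex with vertices $x_0,\dots,x_D$. *)

theory Defs
  imports "HOL-Analysis.Analysis"
begin

definition jac :: "(real^'n \<Rightarrow> real^'n) \<Rightarrow> real^'n \<Rightarrow> real^'n^'n" where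
  "jac \<Phi> x = matrix (frechet_derivative \<Phi> (at x))"

definition diffeo :: "(real^'n \<Rightarrow> real^'n) \<Rightarrow> bool" where
  "diffeo \<Phi> \<longleftrightarrow> bij \<Phi>
     \<and> (\<forall>x. \<Phi> differentiable at x) \<and> continuous_on UNIV (jac \<Phi>)
     \<and> (\<forall>y. inv \<Phi> differentiable at y) \<and> continuous_on UNIV (jac (inv \<Phi>))"

definition distorted_diffeo :: "real \<Rightarrow> (real^'n \<Rightarrow> real^'n) \<Rightarrow> bool" where
  "distorted_diffeo \<epsilon> \<Phi> \<longleftrightarrow> diffeo \<Phi> \<and>
     (\<forall>x v. inverse (1 + \<epsilon>) * (v \<bullet> v) \<le> v \<bullet> ((transpose (jac \<Phi> x) ** jac \<Phi> x) *v v)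
          \<and> v \<bullet> ((transpose (jac \<Phi> x) ** jac \<Phi> x) *v v) \<le> (1 + \<epsilon>) * (v \<bullet> v))"

definition proper_diffeo :: "(real^'n \<Rightarrow> real^'n) \<Rightarrow> bool" where
  "proper_diffeo \<Phi> \<longleftrightarrow> (\<forall>x. det (jac \<Phi> x) > 0)"

definition euclidean_motion :: "(real^'n \<Rightarrow> real^'n) \<Rightarrow> bool" where
  "euclidean_motion A \<longleftrightarrow> (\<exists>T x0. orthogonal_matrix T \<and> (\<forall>x. A x = T *v x + x0))"

definition proper_motion :: "(real^'n \<Rightarrow> real^'n) \<Rightarrow> bool" where
  "proper_motion A \<longleftrightarrow> (\<exists>T x0. orthogonal_matrix T \<and> det T = 1 \<and> (\<forall>x. A x = T *v x + x0))"

definition simplex_vol :: "(nat \<Rightarrow> real^'n) \<Rightarrow> real" where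
  "simplex_vol xs = measure lebesgue (convex hull (xs ` {0..CARD('n)}))"

end

theory Submission
  imports Defs
begin

text \<open>
  At scale r, the difference quotients of \<Phi> at z along the coordinate axes form a
  frame whose Gram matrix is within 3\<epsilon> of the identity: polarization turns the distortion
  bound on lengths into one on inner products. Gram--Schmidt moves this frame by O(\<epsilon>) to an
  orthonormal frame Q, and comparing inner products with the frame shows that \<Phi> stays within
  C'\<epsilon>r of the motion x \<mapsto> \<Phi> z + Q(x - z) on B(z,r). The frames at all scales s \<in> (0,r]
  are nonsingular and tend to \<nabla>\<Phi>(z) as s \<rightarrow> 0, so det Q has the sign of det \<nabla>\<Phi>(z), and that
  sign is the same at every point because \<nabla>\<Phi> is never singular.

  Apply (a) at the vertex x_0 with r = 2. The affine interpolant L then agrees with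
  Q up to O(\<delta>) on the edge vectors x_i - x_0. If some matrix on the segment from Q to L were
  singular, all vertices would lie in a slab of width O(\<delta>) around x_0, and the simplex would
  have volume O(\<delta>) < \<eta>^D. So det is nonzero along the segment and det L has the sign of
  det Q.
\<close>

section \<open>Signs of nonvanishing continuous functions\<close>

lemma continuous_on_nonvanishing_sign_eq:
  fixes g :: "'a::topological_space \<Rightarrow> real"
  assumes "connected S" "continuous_on S g" "\<forall>x\<in>S. g x \<noteq> 0" "a \<in> S" "b \<in> S"
  shows "g a > 0 \<longleftrightarrow> g b > 0"
proof -
  have "connected (g ` S)" using assms(1,2) by (simp add: connected_continuous_image)
  then have "0 \<in> g ` S" if "g x \<le> 0" "g y > 0" "x \<in> S" "y \<in> S" for x y
    using that unfolding connected_iff_interval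
    by (metis (no_types, lifting) image_eqI le_less linorder_linear)
  then show ?thesis using assms(3-5) by (metis image_iff not_less)
qed

lemma tendsto_at_right_sign_eq:
  fixes g :: "real \<Rightarrow> real"
  assumes lim: "(g \<longlongrightarrow> l) (at_right 0)" and "l \<noteq> 0" and "r > 0"
    and cont: "continuous_on {0<..r} g" and nz: "\<forall>s\<in>{0<..r}. g s \<noteq> 0"
  shows "l > 0 \<longleftrightarrow> g r > 0"
proof -
  have "eventually (\<lambda>s. g s > 0 \<longleftrightarrow> l > 0) (at_right 0)"
  proof (cases "l > 0")
    case True
    then show ?thesis using order_tendstoD(1)[OF lim True] by (auto elim: eventually_mono)
  next
    case False
    then have "l < 0" using \<open>l \<noteq> 0\<close> by simp
    then show ?thesis using order_tendstoD(2)[OF lim \<open>l < 0\<close>] by (auto elim: eventually_mono)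
  qed
  then obtain b where "b > 0" and b: "\<And>s. 0 < s \<Longrightarrow> s < b \<Longrightarrow> g s > 0 \<longleftrightarrow> l > 0"
    unfolding eventually_at_right_field by auto
  define s where "s = min r (b / 2)"
  have s: "s \<in> {0<..r}" "s < b" using \<open>b > 0\<close> \<open>r > 0\<close> by (auto simp: s_def)
  have "g s > 0 \<longleftrightarrow> g r > 0"
    by (rule continuous_on_nonvanishing_sign_eq[OF _ cont nz s(1)]) (use \<open>r > 0\<close> in auto)
  with b[of s] s show ?thesis by auto
qed

lemma tendsto_det:
  fixes F :: "'a \<Rightarrow> real^'n^'n"
  assumes "\<And>i j. ((\<lambda>x. F x $ i $ j) \<longlongrightarrow> A $ i $ j) net"
  shows "((\<lambda>x. det (F x)) \<longlongrightarrow> det A) net"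
  unfolding det_def by (intro tendsto_intros assms)

lemma continuous_on_det:
  fixes F :: "'a::topological_space \<Rightarrow> real^'n^'n"
  assumes "continuous_on S F"
  shows "continuous_on S (\<lambda>x. det (F x))"
  using assms unfolding continuous_on_def by (auto intro!: tendsto_det tendsto_vec_nth)

lemma det_sign_eq_if_segment_nonsingular:
  fixes A B :: "real^'n^'n"
  assumes "\<forall>t\<in>{0..1}. det (A + t *\<^sub>R (B - A)) \<noteq> 0"
  shows "det A > 0 \<longleftrightarrow> det B > 0"
proof -
  have "continuous_on {0..1::real} (\<lambda>t. det (A + t *\<^sub>R (B - A)))"
    by (intro continuous_on_det continuous_intros)
  from continuous_on_nonvanishing_sign_eq[OF _ this assms, of 0 1] show ?thesis by simp
qed

section \<open>Almost orthonormal frames\<close>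

definition orthonormal_on :: "'i set \<Rightarrow> ('i \<Rightarrow> 'a::real_inner) \<Rightarrow> bool" where
  "orthonormal_on S f \<longleftrightarrow> (\<forall>i\<in>S. \<forall>j\<in>S. f i \<bullet> f j = (if i = j then 1 else 0))"

lemma orthonormal_on_norm: "orthonormal_on S f \<Longrightarrow> j \<in> S \<Longrightarrow> norm (f j) = 1"
  by (simp add: orthonormal_on_def norm_eq_1)

definition column_matrix :: "('n \<Rightarrow> real^'m) \<Rightarrow> real^'n^'m" where
  "column_matrix f = (\<chi> k i. f i $ k)"

lemma column_column_matrix [simp]: "column i (column_matrix f) = f i"
  unfolding column_matrix_def column_def by (simp add: vec_eq_iff)

lemma column_matrix_mult: "column_matrix f *v w = (\<Sum>i\<in>UNIV. w $ i *\<^sub>R f i)"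
  by (simp add: matrix_mult_sum scalar_mult_eq_scaleR)

lemma transpose_column_matrix_mult_nth: "(transpose (column_matrix f) *v y) $ i = f i \<bullet> y"
  unfolding column_matrix_def transpose_def
  by (simp add: matrix_vector_mult_def inner_vec_def mult.commute)

lemma orthogonal_matrix_column_matrix:
  "orthogonal_matrix (column_matrix f) \<longleftrightarrow> orthonormal_on UNIV f"
  unfolding orthogonal_matrix_orthonormal_columns orthonormal_on_def
  by (auto simp: norm_eq_1 orthogonal_def)

lemma inner_transpose_mult_self: "v \<bullet> ((transpose J ** J) *v v) = (J *v v) \<bullet> (J *v (v::real^'n))"
proof -
  have "v \<bullet> ((transpose J ** J) *v v) = ((J *v v) v* J) \<bullet> v"
    by (simp add: matrix_vector_mul_assoc[symmetric] inner_commute)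
  then show ?thesis by (simp add: dot_lmul_matrix)
qed

lemma norm_orthogonal_matrix_mult:
  assumes "orthogonal_matrix Q"
  shows "norm (Q *v v) = norm (v::real^'n)"
  using inner_transpose_mult_self[of v Q] assms
  unfolding orthogonal_matrix_def by (simp add: norm_eq_sqrt_inner)

lemma norm_mult_ge_if_columns_near_orthonormal:
  fixes P :: "real^'n^'n"
  assumes f: "orthonormal_on UNIV f" and close: "\<forall>i. norm (column i P - f i) \<le> \<beta>"
  shows "(1 - \<beta> * CARD('n)) * norm v \<le> norm (P *v v)"
proof -
  have \<beta>: "\<beta> \<ge> 0" using close norm_ge_zero order_trans by blast
  have "P *v v - column_matrix f *v v = (\<Sum>i\<in>UNIV. v $ i *\<^sub>R (column i P - f i))"
    by (simp add: matrix_mult_sum scalar_mult_eq_scaleR column_matrix_mult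
        sum_subtractf[symmetric] scaleR_diff_right)
  then have "norm (P *v v - column_matrix f *v v) \<le> (\<Sum>i\<in>UNIV. norm (v $ i *\<^sub>R (column i P - f i)))"
    by (metis norm_sum)
  also have "\<dots> \<le> (\<Sum>i\<in>(UNIV::'n set). \<beta> * norm v)"
  proof (rule sum_mono)
    fix i
    have "\<bar>v $ i\<bar> * norm (column i P - f i) \<le> norm v * \<beta>"
      using close \<beta> by (intro mult_mono component_le_norm_cart) auto
    then show "norm (v $ i *\<^sub>R (column i P - f i)) \<le> \<beta> * norm v" by (simp add: mult.commute)
  qed
  finally have "norm (P *v v - column_matrix f *v v) \<le> \<beta> * CARD('n) * norm v" by (simp add: mult_ac)
  moreover have "norm (column_matrix f *v v) = norm v"
    using f by (simp add: norm_orthogonal_matrix_mult orthogonal_matrix_column_matrix)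
  ultimately show ?thesis
    using norm_triangle_ineq3[of "column_matrix f *v v" "P *v v"]
    by (simp add: algebra_simps norm_minus_commute)
qed

lemma det_nonzero_if_columns_near_orthonormal:
  fixes P :: "real^'n^'n"
  assumes "orthonormal_on UNIV f" "\<forall>i. norm (column i P - f i) \<le> \<beta>" "\<beta> * CARD('n) < 1"
  shows "det P \<noteq> 0"
proof -
  have "P *v v = 0 \<Longrightarrow> v = 0" for v
    using norm_mult_ge_if_columns_near_orthonormal[OF assms(1,2), of v] assms(3)
    by (simp add: mult_le_0_iff)
  then have "inj ((*v) P)" by (simp add: linear_injective_0)
  then show ?thesis using det_nz_iff_inj[of "(*v) P"] by simp
qed

lemma det_sign_eq_if_columns_near_orthonormal:
  fixes P :: "real^'n^'n"
  assumes f: "orthonormal_on UNIV f" and close: "\<forall>i. norm (column i P - f i) \<le> \<beta>"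
    and small: "\<beta> * CARD('n) < 1"
  shows "det P > 0 \<longleftrightarrow> det (column_matrix f) > 0"
proof (rule det_sign_eq_if_segment_nonsingular, intro ballI)
  fix t :: real assume t: "t \<in> {0..1}"
  have "column i (P + t *\<^sub>R (column_matrix f - P)) - f i = (1 - t) *\<^sub>R (column i P - f i)" for i
    by (simp add: column_def vec_eq_iff algebra_simps column_matrix_def)
  then have "norm (column i (P + t *\<^sub>R (column_matrix f - P)) - f i) \<le> \<beta>" for i
    using t order_trans[OF mult_left_le_one_le close[rule_format, of i]] by simp
  then show "det (P + t *\<^sub>R (column_matrix f - P)) \<noteq> 0"
    using det_nonzero_if_columns_near_orthonormal[OF f _ small] by blast
qed

lemma norm_near_one_if_inner_self_near_one:
  fixes v :: "'a::real_inner"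
  assumes "\<bar>v \<bullet> v - 1\<bar> \<le> \<eta>"
  shows "\<bar>norm v - 1\<bar> \<le> \<eta>"
proof -
  have "v \<bullet> v - 1 = (norm v - 1) * (norm v + 1)"
    by (simp add: power2_norm_eq_inner[symmetric] algebra_simps power2_eq_square)
  then have "\<bar>norm v - 1\<bar> * (norm v + 1) = \<bar>v \<bullet> v - 1\<bar>" by (simp add: abs_mult)
  moreover have "\<bar>norm v - 1\<bar> \<le> \<bar>norm v - 1\<bar> * (norm v + 1)"
    by (simp add: mult_le_cancel_left1)
  ultimately show ?thesis using assms by linarith
qed

lemma gram_schmidt_step:
  fixes v :: "'a::real_inner" and \<alpha> \<eta> :: real
  assumes "finite S" and f: "orthonormal_on S f" and v: "\<bar>v \<bullet> v - 1\<bar> \<le> \<eta>"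
    and vf: "\<forall>j\<in>S. \<bar>v \<bullet> f j\<bar> \<le> \<alpha>" and small: "card S * \<alpha> + \<eta> \<le> 1/2"
  obtains w where "norm w = 1" "\<forall>j\<in>S. w \<bullet> f j = 0" "norm (w - v) \<le> 2 * card S * \<alpha> + \<eta>"
proof -
  define p where "p = (\<Sum>j\<in>S. (v \<bullet> f j) *\<^sub>R f j)"
  define g where "g = v - p"
  have "norm p \<le> (\<Sum>j\<in>S. \<bar>v \<bullet> f j\<bar> * norm (f j))"
    unfolding p_def using norm_sum[of "\<lambda>j. (v \<bullet> f j) *\<^sub>R f j" S] by simp
  also have "\<dots> \<le> (\<Sum>j\<in>S. \<alpha>)"
    using vf orthonormal_on_norm[OF f] by (intro sum_mono) simp
  finally have p: "norm p \<le> card S * \<alpha>" by simp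
  have "p \<bullet> f l = v \<bullet> f l" if "l \<in> S" for l
  proof -
    have "p \<bullet> f l = (\<Sum>j\<in>S. if j = l then v \<bullet> f j else 0)"
      unfolding p_def inner_sum_left using f that by (intro sum.cong) (auto simp: orthonormal_on_def)
    then show ?thesis using that \<open>finite S\<close> by simp
  qed
  then have g_orth: "\<forall>l\<in>S. g \<bullet> f l = 0" unfolding g_def by (simp add: inner_diff_left)
  have "\<bar>norm g - norm v\<bar> \<le> norm p"
    unfolding g_def using norm_triangle_ineq3[of "v - p" v] by simp
  then have g: "\<bar>norm g - 1\<bar> \<le> card S * \<alpha> + \<eta>"
    using p norm_near_one_if_inner_self_near_one[OF v] by linarith
  then have g0: "norm g > 0" using small by linarith
  define w where "w = g /\<^sub>R norm g"
  have "norm (w - g) = \<bar>1 - norm g\<bar>"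
  proof -
    have "w - g = (1 / norm g - 1) *\<^sub>R g" unfolding w_def by (simp add: algebra_simps divide_inverse)
    moreover have "\<bar>1 / norm g - 1\<bar> * norm g = \<bar>(1 / norm g - 1) * norm g\<bar>"
      using g0 by (simp add: abs_mult)
    ultimately show ?thesis using g0 by (simp add: left_diff_distrib)
  qed
  then have "norm (w - v) \<le> (card S * \<alpha> + \<eta>) + norm p"
    using g norm_triangle_ineq[of "w - g" "g - v"] by (simp add: g_def abs_minus_commute norm_minus_commute)
  then have "norm (w - v) \<le> 2 * card S * \<alpha> + \<eta>" using p by simp
  moreover have "norm w = 1" using g0 unfolding w_def by simp
  moreover have "\<forall>j\<in>S. w \<bullet> f j = 0" using g_orth unfolding w_def by simp
  ultimately show thesis using that by blast
qed

text \<open>Error of Gram--Schmidt, in units of \<eta>, on k vectors whose Gram matrix is entrywise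
  \<eta>-close to the identity: the new vector is moved by 2k(1 + 2 C_k)\<eta> + \<eta>.\<close>

fun gram_schmidt_bound :: "nat \<Rightarrow> real" where
  "gram_schmidt_bound 0 = 0"
| "gram_schmidt_bound (Suc k) = 2 * real k * (1 + 2 * gram_schmidt_bound k) + 1"

lemma gram_schmidt_bound_nonneg: "gram_schmidt_bound k \<ge> 0"
  by (induction k) auto

lemma gram_schmidt_bound_le_Suc: "gram_schmidt_bound k \<le> gram_schmidt_bound (Suc k)"
proof (cases k)
  case (Suc m)
  have "gram_schmidt_bound k \<le> 2 * (1 + 2 * gram_schmidt_bound k)"
    using gram_schmidt_bound_nonneg[of k] by (simp add: algebra_simps)
  also have "\<dots> \<le> 2 * real k * (1 + 2 * gram_schmidt_bound k)"
    using Suc gram_schmidt_bound_nonneg[of k] by (intro mult_right_mono) auto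
  finally show ?thesis by simp
qed simp

lemma almost_orthonormal_near_orthonormal:
  fixes u :: "'i \<Rightarrow> 'a::real_inner"
  assumes "finite S" "\<eta> \<ge> 0" "gram_schmidt_bound (card S) * \<eta> \<le> 1/2"
    "\<forall>i\<in>S. \<forall>j\<in>S. \<bar>u i \<bullet> u j - (if i = j then 1 else 0)\<bar> \<le> \<eta>"
  shows "\<exists>f. orthonormal_on S f \<and> (\<forall>i\<in>S. norm (f i - u i) \<le> gram_schmidt_bound (card S) * \<eta>)"
  using assms
proof (induction S rule: finite_induct)
  case (insert i S)
  define C where "C = gram_schmidt_bound (card S)"
  define \<alpha> where "\<alpha> = (1 + 2 * C) * \<eta>"
  have bound: "gram_schmidt_bound (card (insert i S)) * \<eta> = 2 * card S * \<alpha> + \<eta>"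
    using insert.hyps by (simp add: C_def \<alpha>_def algebra_simps)
  have "0 \<le> card S * \<alpha>"
    using insert.prems gram_schmidt_bound_nonneg[of "card S"] by (simp add: C_def \<alpha>_def)
  then have small: "card S * \<alpha> + \<eta> \<le> 1/2" "\<eta> \<le> 1/2" using bound insert.prems by linarith+
  have "C * \<eta> \<le> gram_schmidt_bound (card (insert i S)) * \<eta>"
    using insert gram_schmidt_bound_le_Suc by (simp add: C_def mult_right_mono)
  then obtain f where f: "orthonormal_on S f" and f_close: "\<forall>j\<in>S. norm (f j - u j) \<le> C * \<eta>"
    using insert by (auto simp: C_def)
  have ui: "\<bar>u i \<bullet> u i - 1\<bar> \<le> \<eta>" using insert.prems(3)[rule_format, of i i] by simp
  have "norm (u i) \<le> 1 + \<eta>" using norm_near_one_if_inner_self_near_one[OF ui] by (simp add: abs_le_iff)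
  then have norm_ui: "norm (u i) \<le> 2" using small(2) by linarith
  have "\<bar>u i \<bullet> f j\<bar> \<le> \<alpha>" if j: "j \<in> S" for j
  proof -
    have "i \<noteq> j" using j \<open>i \<notin> S\<close> by blast
    then have "\<bar>u i \<bullet> u j\<bar> \<le> \<eta>" using insert.prems(3)[rule_format, of i j] j by simp
    moreover have "\<bar>u i \<bullet> (f j - u j)\<bar> \<le> 2 * (C * \<eta>)"
      using Cauchy_Schwarz_ineq2[of "u i" "f j - u j"] mult_mono[OF norm_ui f_close[rule_format, OF j]]
      by simp
    moreover have "u i \<bullet> f j = u i \<bullet> u j + u i \<bullet> (f j - u j)" by (simp add: inner_diff_right)
    moreover have "\<alpha> = \<eta> + 2 * (C * \<eta>)" by (simp add: \<alpha>_def algebra_simps)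
    ultimately show ?thesis by (metis abs_triangle_ineq add_mono order_trans)
  qed
  then obtain w where w: "norm w = 1" "\<forall>j\<in>S. w \<bullet> f j = 0" "norm (w - u i) \<le> 2 * card S * \<alpha> + \<eta>"
    using gram_schmidt_step[OF \<open>finite S\<close> f ui _ small(1)] by blast
  have "orthonormal_on (insert i S) (f(i := w))"
    using f w \<open>i \<notin> S\<close> by (auto simp: orthonormal_on_def inner_commute norm_eq_1[symmetric])
  moreover have "\<forall>j\<in>insert i S. norm ((f(i := w)) j - u j) \<le> gram_schmidt_bound (card (insert i S)) * \<eta>"
    using w(3) f_close \<open>C * \<eta> \<le> _\<close> bound by fastforce
  ultimately show ?case by blast
qed (simp add: orthonormal_on_def)

section \<open>Distorted diffeomorphisms\<close>

lemma has_derivative_jac: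
  assumes "diffeo \<Phi>"
  shows "(\<Phi> has_derivative (\<lambda>v. jac \<Phi> x *v v)) (at x)"
proof -
  have "(\<Phi> has_derivative frechet_derivative \<Phi> (at x)) (at x)"
    using assms frechet_derivative_works unfolding diffeo_def by blast
  moreover from this have "(\<lambda>v. jac \<Phi> x *v v) = frechet_derivative \<Phi> (at x)"
    unfolding jac_def by (simp add: matrix_works has_derivative_linear)
  ultimately show ?thesis by simp
qed

lemma distorted_diffeo_norm_jac:
  assumes "distorted_diffeo \<epsilon> \<Phi>" "\<epsilon> \<ge> 0"
  shows "norm (jac \<Phi> x *v v) \<le> sqrt (1 + \<epsilon>) * norm v"
    and "norm v \<le> sqrt (1 + \<epsilon>) * norm (jac \<Phi> x *v v)"
proof -
  have "inverse (1 + \<epsilon>) * (norm v)\<^sup>2 \<le> (norm (jac \<Phi> x *v v))\<^sup>2"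
    and up: "(norm (jac \<Phi> x *v v))\<^sup>2 \<le> (1 + \<epsilon>) * (norm v)\<^sup>2"
    using assms(1) unfolding distorted_diffeo_def inner_transpose_mult_self
    by (auto simp: power2_norm_eq_inner)
  then have low: "(norm v)\<^sup>2 \<le> (1 + \<epsilon>) * (norm (jac \<Phi> x *v v))\<^sup>2"
    using assms(2) by (simp add: field_simps)
  show "norm (jac \<Phi> x *v v) \<le> sqrt (1 + \<epsilon>) * norm v"
    using real_sqrt_le_mono[OF up] by (simp add: real_sqrt_mult)
  show "norm v \<le> sqrt (1 + \<epsilon>) * norm (jac \<Phi> x *v v)"
    using real_sqrt_le_mono[OF low] by (simp add: real_sqrt_mult)
qed

lemma jac_mult_derivative_inv:
  assumes "diffeo \<Phi>"
  shows "jac \<Phi> (inv \<Phi> y) *v frechet_derivative (inv \<Phi>) (at y) w = w"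
proof -
  let ?G' = "frechet_derivative (inv \<Phi>) (at y)"
  have "(inv \<Phi> has_derivative ?G') (at y)"
    using assms frechet_derivative_works unfolding diffeo_def by blast
  from diff_chain_at[OF this has_derivative_jac[OF assms]]
  have "((\<Phi> \<circ> inv \<Phi>) has_derivative ((*v) (jac \<Phi> (inv \<Phi> y)) \<circ> ?G')) (at y)" .
  moreover have "\<Phi> \<circ> inv \<Phi> = id"
    using assms unfolding diffeo_def by (auto simp: bij_is_surj surj_f_inv_f)
  ultimately have "(*v) (jac \<Phi> (inv \<Phi> y)) \<circ> ?G' = id"
    using has_derivative_unique has_derivative_id by metis
  then show ?thesis by (metis comp_apply id_apply)
qed

lemma distorted_diffeo_lipschitz:
  assumes "distorted_diffeo \<epsilon> \<Phi>" "\<epsilon> \<ge> 0"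
  shows "norm (\<Phi> x - \<Phi> y) \<le> sqrt (1 + \<epsilon>) * norm (x - y)"
proof (rule differentiable_bound[where S=UNIV and f'="\<lambda>x v. jac \<Phi> x *v v"])
  fix x
  show "(\<Phi> has_derivative (*v) (jac \<Phi> x)) (at x within UNIV)"
    using has_derivative_jac assms(1) unfolding distorted_diffeo_def by blast
  show "onorm ((*v) (jac \<Phi> x)) \<le> sqrt (1 + \<epsilon>)"
    by (rule onorm_le) (use distorted_diffeo_norm_jac(1)[OF assms] in auto)
qed auto

lemma distorted_diffeo_lipschitz_inv:
  assumes "distorted_diffeo \<epsilon> \<Phi>" "\<epsilon> \<ge> 0"
  shows "norm (x - y) \<le> sqrt (1 + \<epsilon>) * norm (\<Phi> x - \<Phi> y)"
proof -
  have df: "diffeo \<Phi>" using assms(1) unfolding distorted_diffeo_def by blast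
  have "norm (inv \<Phi> (\<Phi> x) - inv \<Phi> (\<Phi> y)) \<le> sqrt (1 + \<epsilon>) * norm (\<Phi> x - \<Phi> y)"
  proof (rule differentiable_bound[where S=UNIV and f'="\<lambda>y. frechet_derivative (inv \<Phi>) (at y)"])
    fix y
    show "(inv \<Phi> has_derivative frechet_derivative (inv \<Phi>) (at y)) (at y within UNIV)"
      using df frechet_derivative_works unfolding diffeo_def by blast
    show "onorm (frechet_derivative (inv \<Phi>) (at y)) \<le> sqrt (1 + \<epsilon>)"
      by (rule onorm_le)
        (metis distorted_diffeo_norm_jac(2)[OF assms] jac_mult_derivative_inv[OF df])
  qed auto
  moreover have "inj \<Phi>" using df unfolding diffeo_def by (simp add: bij_is_inj)
  ultimately show ?thesis by simp
qed

lemma distorted_diffeo_norm_sq: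
  assumes "distorted_diffeo \<epsilon> \<Phi>" "\<epsilon> \<ge> 0"
  shows "\<bar>(norm (\<Phi> x - \<Phi> y))\<^sup>2 - (norm (x - y))\<^sup>2\<bar> \<le> \<epsilon> * (norm (x - y))\<^sup>2"
proof -
  let ?a = "norm (\<Phi> x - \<Phi> y)" and ?b = "norm (x - y)"
  have "?a\<^sup>2 \<le> (sqrt (1 + \<epsilon>) * ?b)\<^sup>2"
    using distorted_diffeo_lipschitz[OF assms] by (simp add: power_mono)
  then have up: "?a\<^sup>2 \<le> (1 + \<epsilon>) * ?b\<^sup>2" using assms(2) by (simp add: power_mult_distrib)
  have "?b\<^sup>2 \<le> (sqrt (1 + \<epsilon>) * ?a)\<^sup>2"
    using distorted_diffeo_lipschitz_inv[OF assms] by (simp add: power_mono)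
  then have "?b\<^sup>2 \<le> (1 + \<epsilon>) * ?a\<^sup>2" using assms(2) by (simp add: power_mult_distrib)
  then have "?b\<^sup>2 / (1 + \<epsilon>) \<le> ?a\<^sup>2" using assms(2) by (simp add: field_simps)
  moreover have "?b\<^sup>2 - \<epsilon> * ?b\<^sup>2 \<le> ?b\<^sup>2 / (1 + \<epsilon>)"
    using assms(2) by (simp add: field_simps)
  ultimately have "?b\<^sup>2 - \<epsilon> * ?b\<^sup>2 \<le> ?a\<^sup>2" by linarith
  with up show ?thesis by (simp add: abs_le_iff algebra_simps)
qed

lemma distorted_diffeo_inner:
  assumes dd: "distorted_diffeo \<epsilon> \<Phi>" "\<epsilon> \<ge> 0" and "norm a \<le> r" "norm b \<le> r"
  shows "\<bar>(\<Phi> (z + a) - \<Phi> z) \<bullet> (\<Phi> (z + b) - \<Phi> z) - a \<bullet> b\<bar> \<le> 3 * \<epsilon> * r\<^sup>2"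
proof -
  have sq: "\<bar>(norm (\<Phi> x - \<Phi> y))\<^sup>2 - (norm (x - y))\<^sup>2\<bar> \<le> \<epsilon> * t\<^sup>2" if "norm (x - y) \<le> t" for x y t
    using distorted_diffeo_norm_sq[OF dd, of x y] that \<open>\<epsilon> \<ge> 0\<close>
    by (meson mult_left_mono norm_ge_zero order_trans power_mono)
  have polar: "\<bar>(B + C - A) / 2 - (b + c - a) / 2\<bar> \<le> 3 * E"
    if "\<bar>A - a\<bar> \<le> 4 * E" "\<bar>B - b\<bar> \<le> E" "\<bar>C - c\<bar> \<le> E" for A a B b C c E :: real
    using that by (simp add: abs_le_iff field_simps)
  have "norm (a - b) \<le> 2 * r" using assms(3,4) norm_triangle_ineq4[of a b] by simp
  then have "\<bar>(norm (\<Phi> (z + a) - \<Phi> (z + b)))\<^sup>2 - (norm (a - b))\<^sup>2\<bar> \<le> 4 * (\<epsilon> * r\<^sup>2)"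
    using sq[of "z + a" "z + b" "2 * r"] by (simp add: power_mult_distrib)
  moreover have "\<bar>(norm (\<Phi> (z + a) - \<Phi> z))\<^sup>2 - (norm a)\<^sup>2\<bar> \<le> \<epsilon> * r\<^sup>2"
    using sq[of "z + a" z] assms(3) by simp
  moreover have "\<bar>(norm (\<Phi> (z + b) - \<Phi> z))\<^sup>2 - (norm b)\<^sup>2\<bar> \<le> \<epsilon> * r\<^sup>2"
    using sq[of "z + b" z] assms(4) by simp
  ultimately show ?thesis
    unfolding dot_norm_neg[of "\<Phi> (z + a) - \<Phi> z"] dot_norm_neg[of a]
    using polar by (simp add: mult.assoc)
qed

lemma det_jac_nonzero:
  assumes "distorted_diffeo \<epsilon> \<Phi>" "\<epsilon> \<ge> 0"
  shows "det (jac \<Phi> x) \<noteq> 0"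
proof -
  have "jac \<Phi> x *v v = 0 \<Longrightarrow> v = 0" for v
    using distorted_diffeo_norm_jac(2)[OF assms, of v x] by simp
  then have "inj ((*v) (jac \<Phi> x))" by (simp add: linear_injective_0)
  then show ?thesis using det_nz_iff_inj[of "(*v) (jac \<Phi> x)"] by simp
qed

lemma proper_diffeo_iff_det_jac_pos:
  assumes "distorted_diffeo \<epsilon> \<Phi>" "\<epsilon> \<ge> 0"
  shows "proper_diffeo \<Phi> \<longleftrightarrow> det (jac \<Phi> z) > 0"
proof -
  have "continuous_on UNIV (\<lambda>x. det (jac \<Phi> x))"
    using assms(1) unfolding distorted_diffeo_def diffeo_def by (simp add: continuous_on_det)
  then have "det (jac \<Phi> z) > 0 \<longleftrightarrow> det (jac \<Phi> x) > 0" for x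
    using det_jac_nonzero[OF assms] by (intro continuous_on_nonvanishing_sign_eq) auto
  then show ?thesis unfolding proper_diffeo_def by blast
qed

section \<open>Secant frames\<close>

definition secant_frame :: "(real^'n \<Rightarrow> real^'m) \<Rightarrow> real^'n \<Rightarrow> real \<Rightarrow> 'n \<Rightarrow> real^'m" where
  "secant_frame \<Phi> z s i = (\<Phi> (z + s *\<^sub>R axis i 1) - \<Phi> z) /\<^sub>R s"

lemma inner_secant_frame_left:
  "secant_frame \<Phi> z s i \<bullet> y = ((\<Phi> (z + s *\<^sub>R axis i 1) - \<Phi> z) \<bullet> y) / s"
  unfolding secant_frame_def inner_scaleR_left by (simp add: divide_inverse mult.commute)

lemma secant_frame_almost_orthonormal:
  assumes dd: "distorted_diffeo \<epsilon> \<Phi>" "\<epsilon> \<ge> 0" and "s > 0"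
  shows "\<bar>secant_frame \<Phi> z s i \<bullet> secant_frame \<Phi> z s j - (if i = j then 1 else 0)\<bar> \<le> 3 * \<epsilon>"
proof -
  let ?a = "s *\<^sub>R axis i (1::real)" and ?b = "s *\<^sub>R axis j (1::real)"
  have "\<bar>(\<Phi> (z + ?a) - \<Phi> z) \<bullet> (\<Phi> (z + ?b) - \<Phi> z) - ?a \<bullet> ?b\<bar> \<le> 3 * \<epsilon> * s\<^sup>2"
    using \<open>s > 0\<close> by (intro distorted_diffeo_inner[OF dd]) auto
  moreover have "secant_frame \<Phi> z s i \<bullet> secant_frame \<Phi> z s j - (if i = j then 1 else 0)
      = ((\<Phi> (z + ?a) - \<Phi> z) \<bullet> (\<Phi> (z + ?b) - \<Phi> z) - ?a \<bullet> ?b) / s\<^sup>2"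
    using \<open>s > 0\<close> unfolding secant_frame_def inner_scaleR_left inner_scaleR_right
    by (simp add: inner_axis_axis field_simps power2_eq_square)
  ultimately show ?thesis using \<open>s > 0\<close> by (simp add: divide_le_eq)
qed

lemma secant_frame_near_orthonormal:
  fixes \<Phi> :: "real^'n \<Rightarrow> real^'n"
  assumes "distorted_diffeo \<epsilon> \<Phi>" "\<epsilon> \<ge> 0" "s > 0"
    and "gram_schmidt_bound CARD('n) * (3 * \<epsilon>) \<le> 1/2"
  obtains f where "orthonormal_on UNIV f"
    "\<forall>i. norm (f i - secant_frame \<Phi> z s i) \<le> gram_schmidt_bound CARD('n) * (3 * \<epsilon>)"
  using almost_orthonormal_near_orthonormal[of UNIV "3 * \<epsilon>" "secant_frame \<Phi> z s"]
    secant_frame_almost_orthonormal[OF assms(1-3)] assms(2,4) by auto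

lemma det_secant_frame_nonzero:
  fixes \<Phi> :: "real^'n \<Rightarrow> real^'n"
  assumes "distorted_diffeo \<epsilon> \<Phi>" "\<epsilon> \<ge> 0" "s > 0"
    and "gram_schmidt_bound CARD('n) * (3 * \<epsilon>) \<le> 1/2"
    and "gram_schmidt_bound CARD('n) * (3 * \<epsilon>) * CARD('n) < 1"
  shows "det (column_matrix (secant_frame \<Phi> z s)) \<noteq> 0"
proof -
  obtain f where f: "orthonormal_on UNIV f"
    "\<forall>i. norm (f i - secant_frame \<Phi> z s i) \<le> gram_schmidt_bound CARD('n) * (3 * \<epsilon>)"
    using secant_frame_near_orthonormal[OF assms(1-4)] by blast
  show ?thesis
    by (rule det_nonzero_if_columns_near_orthonormal[OF f(1) _ assms(5)])
      (use f(2) in \<open>simp add: norm_minus_commute\<close>)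
qed

lemma column_matrix_secant_frame_nth:
  "column_matrix (secant_frame \<Phi> z s) $ k $ i = (\<Phi> (z + s *\<^sub>R axis i 1) - \<Phi> z) $ k / s"
  unfolding column_matrix_def secant_frame_def by (simp add: divide_inverse mult.commute)

lemma tendsto_difference_quotient_nth:
  fixes \<Phi> :: "real^'n \<Rightarrow> real^'m"
  assumes "(\<Phi> has_derivative (\<lambda>v. J *v v)) (at z)"
  shows "((\<lambda>s. (\<Phi> (z + s *\<^sub>R e) - \<Phi> z) $ k / s) \<longlongrightarrow> (J *v e) $ k) (at_right 0)"
proof -
  have "((\<lambda>s. z + s *\<^sub>R e) has_derivative (\<lambda>s. s *\<^sub>R e)) (at 0)"
    by (auto intro!: derivative_eq_intros)
  from diff_chain_at[OF this] assms
  have "((\<lambda>s. \<Phi> (z + s *\<^sub>R e)) has_derivative (\<lambda>s. J *v (s *\<^sub>R e))) (at 0)"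
    by (simp add: o_def)
  from bounded_linear.has_derivative[OF bounded_linear_vec_nth[of k] this]
  have "((\<lambda>s. \<Phi> (z + s *\<^sub>R e) $ k) has_field_derivative (J *v e) $ k) (at 0)"
    by (simp add: has_field_derivative_def matrix_vector_mult_scaleR mult_commute_abs)
  then have "((\<lambda>s. (\<Phi> (z + s *\<^sub>R e) - \<Phi> z) $ k / s) \<longlongrightarrow> (J *v e) $ k) (at 0)"
    unfolding has_field_derivative_iff by simp
  then show ?thesis using filterlim_at_split by blast
qed

lemma tendsto_det_secant_frame:
  assumes "diffeo \<Phi>"
  shows "((\<lambda>s. det (column_matrix (secant_frame \<Phi> z s))) \<longlongrightarrow> det (jac \<Phi> z)) (at_right 0)"
proof (rule tendsto_det)
  fix k i
  have "((\<lambda>s. (\<Phi> (z + s *\<^sub>R axis i 1) - \<Phi> z) $ k / s) \<longlongrightarrow> (jac \<Phi> z *v axis i 1) $ k)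
      (at_right 0)"
    by (rule tendsto_difference_quotient_nth[OF has_derivative_jac[OF assms]])
  then show "((\<lambda>s. column_matrix (secant_frame \<Phi> z s) $ k $ i) \<longlongrightarrow> jac \<Phi> z $ k $ i) (at_right 0)"
    unfolding column_matrix_secant_frame_nth by (simp add: matrix_vector_mult_basis column_def)
qed

lemma continuous_on_det_secant_frame:
  assumes "continuous_on UNIV \<Phi>"
  shows "continuous_on {0<..} (\<lambda>s. det (column_matrix (secant_frame \<Phi> z s)))"
proof (rule continuous_on_det)
  have "continuous_on {0<..} (\<lambda>s. \<Phi> (z + s *\<^sub>R axis i 1))" for i
    by (rule continuous_on_compose2[OF assms]) (auto intro!: continuous_intros)
  then show "continuous_on {0<..} (\<lambda>s. column_matrix (secant_frame \<Phi> z s))"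
    unfolding column_matrix_def secant_frame_def by (auto intro!: continuous_intros)
qed

lemma det_jac_sign_eq_secant_frame:
  fixes \<Phi> :: "real^'n \<Rightarrow> real^'n"
  assumes dd: "distorted_diffeo \<epsilon> \<Phi>" "\<epsilon> \<ge> 0" and "r > 0"
    and small: "gram_schmidt_bound CARD('n) * (3 * \<epsilon>) \<le> 1/2"
      "gram_schmidt_bound CARD('n) * (3 * \<epsilon>) * CARD('n) < 1"
  shows "det (jac \<Phi> z) > 0 \<longleftrightarrow> det (column_matrix (secant_frame \<Phi> z r)) > 0"
proof (rule tendsto_at_right_sign_eq[where g = "\<lambda>s. det (column_matrix (secant_frame \<Phi> z s))"])
  have df: "diffeo \<Phi>" using dd(1) unfolding distorted_diffeo_def by blast
  then show "((\<lambda>s. det (column_matrix (secant_frame \<Phi> z s))) \<longlongrightarrow> det (jac \<Phi> z)) (at_right 0)"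
    by (rule tendsto_det_secant_frame)
  have "continuous_on UNIV \<Phi>"
    using df unfolding diffeo_def
    by (simp add: differentiable_imp_continuous_within continuous_at_imp_continuous_on)
  then show "continuous_on {0<..r} (\<lambda>s. det (column_matrix (secant_frame \<Phi> z s)))"
    by (rule continuous_on_subset[OF continuous_on_det_secant_frame]) auto
qed (use assms det_jac_nonzero[OF dd] det_secant_frame_nonzero[OF dd _ small] in auto)

lemma secant_frame_inner_estimate:
  assumes dd: "distorted_diffeo \<epsilon> \<Phi>" "\<epsilon> \<ge> 0" and "r > 0" and "norm (x - z) \<le> r"
  shows "\<bar>secant_frame \<Phi> z r i \<bullet> (\<Phi> x - \<Phi> z) - (x - z) $ i\<bar> \<le> 3 * \<epsilon> * r"
proof -
  let ?a = "r *\<^sub>R axis i (1::real)"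
  have "\<bar>(\<Phi> (z + ?a) - \<Phi> z) \<bullet> (\<Phi> (z + (x - z)) - \<Phi> z) - ?a \<bullet> (x - z)\<bar> \<le> 3 * \<epsilon> * r\<^sup>2"
    using assms(3,4) by (intro distorted_diffeo_inner[OF dd]) auto
  moreover have "secant_frame \<Phi> z r i \<bullet> (\<Phi> x - \<Phi> z) - (x - z) $ i
      = ((\<Phi> (z + ?a) - \<Phi> z) \<bullet> (\<Phi> (z + (x - z)) - \<Phi> z) - ?a \<bullet> (x - z)) / r"
    using \<open>r > 0\<close> unfolding inner_secant_frame_left by (simp add: inner_axis' field_simps)
  ultimately show ?thesis using \<open>r > 0\<close> by (simp add: divide_le_eq power2_eq_square mult_ac)
qed

lemma orthonormal_frame_approximation:
  fixes \<Phi> :: "real^'n \<Rightarrow> real^'n"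
  assumes dd: "distorted_diffeo \<epsilon> \<Phi>" "\<epsilon> \<ge> 0" and "\<epsilon> \<le> 3" and "r > 0"
    and f: "orthonormal_on UNIV f" "\<forall>i. norm (f i - secant_frame \<Phi> z r i) \<le> \<beta>"
    and x: "norm (x - z) \<le> r"
  shows "norm (\<Phi> x - \<Phi> z - column_matrix f *v (x - z)) \<le> real CARD('n) * ((3 * \<epsilon> + 2 * \<beta>) * r)"
proof -
  define Q where "Q = column_matrix f"
  have Q: "orthogonal_matrix Q" using f(1) by (simp add: Q_def orthogonal_matrix_column_matrix)
  have "sqrt (1 + \<epsilon>) \<le> 2" using \<open>\<epsilon> \<le> 3\<close> real_sqrt_le_mono[of "1 + \<epsilon>" 4] by simp
  then have y: "norm (\<Phi> x - \<Phi> z) \<le> 2 * r"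
    using distorted_diffeo_lipschitz[OF dd, of x z] mult_mono[OF _ x] by fastforce
  have "\<bar>(transpose Q *v (\<Phi> x - \<Phi> z) - (x - z)) $ i\<bar> \<le> (3 * \<epsilon> + 2 * \<beta>) * r" for i
  proof -
    have "\<beta> \<ge> 0" using f(2) norm_ge_zero order_trans by blast
    then have "\<bar>(f i - secant_frame \<Phi> z r i) \<bullet> (\<Phi> x - \<Phi> z)\<bar> \<le> \<beta> * (2 * r)"
      using Cauchy_Schwarz_ineq2[of "f i - secant_frame \<Phi> z r i" "\<Phi> x - \<Phi> z"]
        mult_mono[OF f(2)[rule_format, of i] y] by fastforce
    moreover have "(transpose Q *v (\<Phi> x - \<Phi> z) - (x - z)) $ i
        = (secant_frame \<Phi> z r i \<bullet> (\<Phi> x - \<Phi> z) - (x - z) $ i)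
          + (f i - secant_frame \<Phi> z r i) \<bullet> (\<Phi> x - \<Phi> z)"
      unfolding vector_minus_component Q_def transpose_column_matrix_mult_nth inner_diff_left
      by simp
    ultimately show ?thesis
      using secant_frame_inner_estimate[OF dd \<open>r > 0\<close> x, of i] by (simp add: algebra_simps)
  qed
  then have "(\<Sum>i\<in>UNIV. \<bar>(transpose Q *v (\<Phi> x - \<Phi> z) - (x - z)) $ i\<bar>)
      \<le> (\<Sum>i\<in>(UNIV::'n set). (3 * \<epsilon> + 2 * \<beta>) * r)"
    by (rule sum_mono)
  then have bound: "norm (transpose Q *v (\<Phi> x - \<Phi> z) - (x - z)) \<le> real CARD('n) * ((3 * \<epsilon> + 2 * \<beta>) * r)"
    using norm_le_l1_cart[of "transpose Q *v (\<Phi> x - \<Phi> z) - (x - z)"] by simp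
  have "norm (\<Phi> x - \<Phi> z - Q *v (x - z)) = norm (transpose Q *v (\<Phi> x - \<Phi> z - Q *v (x - z)))"
    using Q by (metis norm_orthogonal_matrix_mult orthogonal_matrix_transpose)
  also have "transpose Q *v (\<Phi> x - \<Phi> z - Q *v (x - z)) = transpose Q *v (\<Phi> x - \<Phi> z) - (x - z)"
    using Q by (simp only: matrix_vector_mult_diff_distrib matrix_vector_mul_assoc orthogonal_matrix_def
        matrix_vector_mul_lid)
  finally show ?thesis using bound unfolding Q_def by linarith
qed

section \<open>Approximation by Euclidean motions\<close>

definition distortion_threshold :: "nat \<Rightarrow> real" where
  "distortion_threshold d = 1 / (6 * (gram_schmidt_bound d + 1) * (real d + 1))"

definition motion_error_const :: "nat \<Rightarrow> real" where
  "motion_error_const d = real d * (3 + 6 * gram_schmidt_bound d)"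

lemma distortion_threshold_pos: "distortion_threshold d > 0"
  using gram_schmidt_bound_nonneg[of d] by (simp add: distortion_threshold_def add_pos_nonneg)

lemma motion_error_const_pos: "d > 0 \<Longrightarrow> motion_error_const d > 0"
  using gram_schmidt_bound_nonneg[of d] by (simp add: motion_error_const_def add_pos_nonneg)

lemma below_distortion_threshold:
  assumes "0 < \<epsilon>" "\<epsilon> < distortion_threshold d"
  shows "\<epsilon> < 1" "gram_schmidt_bound d * (3 * \<epsilon>) \<le> 1/2"
    "gram_schmidt_bound d * (3 * \<epsilon>) * d < 1"
proof -
  define K where "K = gram_schmidt_bound d"
  define P where "P = (K + 1) * (real d + 1)"
  have K: "K \<ge> 0" using gram_schmidt_bound_nonneg by (simp add: K_def)
  then have "K \<le> P" "K * d \<le> P" "1 \<le> P" by (simp_all add: P_def algebra_simps)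
  moreover have "distortion_threshold d = 1 / (6 * P)"
    by (simp add: distortion_threshold_def K_def P_def mult.assoc)
  then have eP: "\<epsilon> * P < 1/6"
    using assms(2) \<open>1 \<le> P\<close> by (simp add: less_divide_eq)
  ultimately have "\<epsilon> * 1 \<le> \<epsilon> * P" "\<epsilon> * K \<le> \<epsilon> * P" "\<epsilon> * (K * d) \<le> \<epsilon> * P"
    using \<open>0 < \<epsilon>\<close> by (simp_all add: mult_left_mono)
  with eP show "\<epsilon> < 1" "gram_schmidt_bound d * (3 * \<epsilon>) \<le> 1/2"
    "gram_schmidt_bound d * (3 * \<epsilon>) * d < 1"
    by (simp_all add: K_def mult_ac)
qed

lemma distorted_diffeo_near_orthogonal:
  fixes \<Phi> :: "real^'n \<Rightarrow> real^'n"
  assumes dd: "distorted_diffeo \<epsilon> \<Phi>" and \<epsilon>: "0 < \<epsilon>" "\<epsilon> < distortion_threshold CARD('n)"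
    and "r > 0"
  obtains Q where "orthogonal_matrix Q"
    "\<And>x. norm (x - z) \<le> r \<Longrightarrow> norm (\<Phi> x - \<Phi> z - Q *v (x - z)) \<le> motion_error_const CARD('n) * \<epsilon> * r"
    "det Q > 0 \<longleftrightarrow> det (jac \<Phi> z) > 0"
proof -
  define \<beta> where "\<beta> = gram_schmidt_bound CARD('n) * (3 * \<epsilon>)"
  note small = below_distortion_threshold[OF \<epsilon>]
  have dd': "distorted_diffeo \<epsilon> \<Phi>" "\<epsilon> \<ge> 0" using dd \<epsilon> by auto
  obtain f where f: "orthonormal_on UNIV f" "\<forall>i. norm (f i - secant_frame \<Phi> z r i) \<le> \<beta>"
    using secant_frame_near_orthonormal[OF dd' \<open>r > 0\<close> small(2)] unfolding \<beta>_def by blast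
  have "norm (\<Phi> x - \<Phi> z - column_matrix f *v (x - z)) \<le> motion_error_const CARD('n) * \<epsilon> * r"
    if "norm (x - z) \<le> r" for x
    using orthonormal_frame_approximation[OF dd' _ \<open>r > 0\<close> f that] small(1)
    by (simp add: \<beta>_def motion_error_const_def algebra_simps)
  moreover have "det (column_matrix f) > 0 \<longleftrightarrow> det (jac \<Phi> z) > 0"
    using det_sign_eq_if_columns_near_orthonormal[OF f(1), of "column_matrix (secant_frame \<Phi> z r)" \<beta>]
      det_jac_sign_eq_secant_frame[OF dd' \<open>r > 0\<close> small(2,3)] f(2) small(3)
    by (simp add: \<beta>_def norm_minus_commute)
  ultimately show thesis
    using that orthogonal_matrix_column_matrix f(1) by blast
qed

lemma proper_motion_iff_det_pos:
  assumes Q: "orthogonal_matrix Q" and A: "\<forall>x. A x = Q *v x + a"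
  shows "proper_motion A \<longleftrightarrow> det Q > 0"
proof
  assume "proper_motion A"
  then obtain T x0 where T: "det T = 1" "\<forall>x. A x = T *v x + x0"
    unfolding proper_motion_def by blast
  have "x0 = a" using T(2) A by (metis add.left_neutral matrix_vector_mult_0_right)
  then have "T = Q" using T(2) A by (simp add: matrix_eq)
  then show "det Q > 0" using T(1) by simp
next
  assume "det Q > 0"
  then have "det Q = 1" using det_orthogonal_matrix[OF Q] by auto
  then show "proper_motion A" unfolding proper_motion_def using Q A by blast
qed

lemma distorted_diffeo_near_euclidean_motion:
  fixes \<Phi> :: "real^'n \<Rightarrow> real^'n"
  assumes dd: "distorted_diffeo \<epsilon> \<Phi>" and \<epsilon>: "0 < \<epsilon>" "\<epsilon> < distortion_threshold CARD('n)"
    and "r > 0"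
  shows "\<exists>A. euclidean_motion A \<and> (\<forall>x\<in>ball z r. norm (\<Phi> x - A x) \<le> motion_error_const CARD('n) * \<epsilon> * r)
    \<and> (proper_motion A \<longleftrightarrow> proper_diffeo \<Phi>)"
proof -
  obtain Q where Q: "orthogonal_matrix Q"
    "\<And>x. norm (x - z) \<le> r \<Longrightarrow> norm (\<Phi> x - \<Phi> z - Q *v (x - z)) \<le> motion_error_const CARD('n) * \<epsilon> * r"
    "det Q > 0 \<longleftrightarrow> det (jac \<Phi> z) > 0"
    using distorted_diffeo_near_orthogonal[OF assms] by blast
  define A where "A x = Q *v x + (\<Phi> z - Q *v z)" for x
  have "\<Phi> x - A x = \<Phi> x - \<Phi> z - Q *v (x - z)" for x
    by (simp add: A_def matrix_vector_mult_diff_distrib algebra_simps)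
  moreover have "x \<in> ball z r \<Longrightarrow> norm (x - z) \<le> r" for x
    by (simp add: dist_norm norm_minus_commute)
  ultimately have "\<forall>x\<in>ball z r. norm (\<Phi> x - A x) \<le> motion_error_const CARD('n) * \<epsilon> * r"
    using Q(2) by metis
  moreover have "euclidean_motion A" using Q(1) by (auto simp: euclidean_motion_def A_def)
  moreover have "proper_motion A \<longleftrightarrow> proper_diffeo \<Phi>"
    using proper_motion_iff_det_pos[OF Q(1)] Q(3) proper_diffeo_iff_det_jac_pos[OF dd] \<epsilon>
    by (simp add: A_def)
  ultimately show ?thesis by blast
qed

section \<open>Simplices in thin slabs\<close>

lemma slab_eq_Int_halfspaces:
  "{y. \<bar>u \<bullet> y\<bar> \<le> t \<and> norm y \<le> 1} = cball 0 1 \<inter> {y. u \<bullet> y \<le> t} \<inter> {y. -t \<le> u \<bullet> y}"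
  by (auto simp: abs_le_iff)

lemma compact_slab: "compact {y::'a::euclidean_space. \<bar>u \<bullet> y\<bar> \<le> t \<and> norm y \<le> 1}"
  unfolding slab_eq_Int_halfspaces
  by (simp add: compact_Int_closed closed_Int closed_halfspace_le closed_halfspace_ge)

lemma measure_le_of_disjoint_translates:
  fixes H :: "'a::euclidean_space set"
  assumes H: "H \<in> lmeasurable" and disj: "disjoint_family_on (\<lambda>k. (+) (a k) ` H) {..<N}"
    and sub: "(\<Union>k<N. (+) (a k) ` H) \<subseteq> cball 0 r"
  shows "real N * measure lebesgue H \<le> measure lebesgue (cball (0::'a) r)"
proof -
  have sets: "(\<lambda>k. (+) (a k) ` H) ` {..<N} \<subseteq> sets lebesgue"
    using measurable_translation[OF H] by (auto intro: fmeasurableD)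
  have "real N * measure lebesgue H = measure lebesgue (\<Union>k<N. (+) (a k) ` H)"
    using measure_finite_Union[OF _ sets disj] measurable_translation[OF H]
    by (simp add: emeasure_eq_measure2 measure_translation)
  also have "\<dots> \<le> measure lebesgue (cball (0::'a) r)"
    using sub sets by (intro measure_mono_fmeasurable) (auto intro: sets.finite_UN)
  finally show ?thesis .
qed

lemma measure_slab_le:
  fixes n :: "'a::euclidean_space"
  assumes n: "norm n = 1" and t: "t > 0"
  shows "measure lebesgue {y. \<bar>n \<bullet> y\<bar> \<le> t \<and> norm y \<le> 1} \<le> 3 * t * measure lebesgue (cball (0::'a) 2)"
proof -
  txt \<open>About 1/(3t) pairwise disjoint translates of the slab along n fit into \<open>cball 0 2\<close>.\<close>
  define H where "H = {y. \<bar>n \<bullet> y\<bar> \<le> t \<and> norm y \<le> 1}"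
  have H: "H \<in> lmeasurable" unfolding H_def by (rule lmeasurable_compact[OF compact_slab])
  define N where "N = nat \<lfloor>1 / (3 * t)\<rfloor> + 1"
  define A where "A k = (+) ((3 * t * real k) *\<^sub>R n) ` H" for k
  have A_mem: "\<bar>n \<bullet> y - 3 * t * real k\<bar> \<le> t \<and> norm y \<le> 3 * t * real k + 1" if yA: "y \<in> A k" for y k
  proof -
    obtain h where "h \<in> H" "y = (3 * t * real k) *\<^sub>R n + h" using yA unfolding A_def image_iff by blast
    moreover have "norm ((3 * t * real k) *\<^sub>R n) = 3 * t * real k" using n t by simp
    ultimately show ?thesis
      using n norm_eq_1[of n] norm_triangle_ineq[of "(3 * t * real k) *\<^sub>R n" h]
      by (auto simp: H_def inner_add_right)
  qed
  have disj: "disjoint_family_on A {..<N}"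
    unfolding disjoint_family_on_def
  proof (intro ballI impI)
    fix j k :: nat assume "j \<noteq> k"
    then have "1 \<le> \<bar>real j - real k\<bar>" by (cases j k rule: linorder_cases) auto
    moreover have "\<bar>3 * t * real j - 3 * t * real k\<bar> = 3 * t * \<bar>real j - real k\<bar>"
      using t by (simp add: abs_mult right_diff_distrib[symmetric])
    ultimately have "3 * t \<le> \<bar>3 * t * real j - 3 * t * real k\<bar>" using t by simp
    then have "y \<notin> A j \<inter> A k" for y
      using A_mem[of y j] A_mem[of y k] t by auto
    then show "A j \<inter> A k = {}" by blast
  qed
  have sub: "(\<Union>k<N. A k) \<subseteq> cball 0 2"
  proof (safe)
    fix y k assume "k < N" "y \<in> A k"
    then have "k \<le> nat \<lfloor>1 / (3 * t)\<rfloor>" by (simp add: N_def)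
    then have "int k \<le> \<lfloor>1 / (3 * t)\<rfloor>" using t by (simp add: le_nat_iff)
    then have "real k \<le> 1 / (3 * t)" by (simp add: le_floor_iff)
    then have "3 * t * real k \<le> 1" using t by (simp add: field_simps)
    then show "y \<in> cball 0 2" using A_mem[OF \<open>y \<in> A k\<close>] by simp
  qed
  have N_copies: "real N * measure lebesgue H \<le> measure lebesgue (cball (0::'a) 2)"
    using measure_le_of_disjoint_translates[OF H disj[unfolded A_def] sub[unfolded A_def]] .
  have "measure lebesgue H = 3 * t * (1 / (3 * t) * measure lebesgue H)" using t by simp
  also have "\<dots> \<le> 3 * t * (real N * measure lebesgue H)"
    using t unfolding N_def by (intro mult_left_mono mult_right_mono) (linarith, simp_all)
  also have "\<dots> \<le> 3 * t * measure lebesgue (cball (0::'a) 2)"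
    using t N_copies by (intro mult_left_mono) simp_all
  finally show ?thesis unfolding H_def .
qed

lemma singular_on_segment_obtains_direction:
  fixes Q L :: "real^'n^'n"
  assumes Q: "orthogonal_matrix Q" and s: "0 \<le> s" "s \<le> 1"
    and sing: "det (Q + s *\<^sub>R (L - Q)) = 0"
  obtains u where "norm u = 1" "\<And>w. \<bar>u \<bullet> w\<bar> \<le> norm ((L - Q) *v w)"
proof -
  define M where "M = L - Q"
  have "\<not> inj ((*v) (Q + s *\<^sub>R M))" using sing det_nz_iff_inj[of "(*v) (Q + s *\<^sub>R M)"] M_def by simp
  then obtain v where "v \<noteq> 0" and v: "(Q + s *\<^sub>R M) *v v = 0"
    using linear_injective_0[of "(*v) (Q + s *\<^sub>R M)"] by auto
  have "Q *v v = - (s *\<^sub>R (M *v v))" using v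
    by (simp add: matrix_vector_mult_add_rdistrib scaleR_matrix_vector_assoc eq_neg_iff_add_eq_0)
  then have "norm v = s * norm (M *v v)" using norm_orthogonal_matrix_mult[OF Q, of v] s by simp
  then have Mv: "norm v \<le> norm (M *v v)" using s mult_left_le_one_le[of "norm (M *v v)" s] by simp
  then have Mv_pos: "norm (M *v v) > 0" using \<open>v \<noteq> 0\<close> zero_less_norm_iff[of v] by linarith
  txt \<open>For v in the kernel, \<open>|M v| \<ge> |v|\<close>; the direction of \<open>M\<^sup>T M v\<close> then does the job.\<close>
  define n where "n = transpose M *v (M *v v)"
  have n_inner: "n \<bullet> w = (M *v v) \<bullet> (M *v w)" for w
    unfolding n_def by (metis dot_lmul_matrix inner_commute vector_transpose_matrix)
  have "norm (M *v v) * norm (M *v v) \<le> norm n * norm (M *v v)"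
    using Cauchy_Schwarz_ineq2[of n v] n_inner[of v] Mv mult_left_mono[OF Mv, of "norm n"]
    by (simp add: power2_norm_eq_inner[symmetric] power2_eq_square)
  then have n_ge: "norm (M *v v) \<le> norm n" using Mv_pos by simp
  then have "norm n > 0" using Mv_pos by linarith
  show thesis
  proof
    show "norm (n /\<^sub>R norm n) = 1" using \<open>norm n > 0\<close> by simp
    fix w
    have "\<bar>n \<bullet> w\<bar> \<le> norm n * norm (M *v w)"
      using Cauchy_Schwarz_ineq2[of "M *v v" "M *v w"] n_ge mult_right_mono[OF n_ge, of "norm (M *v w)"]
      by (simp add: n_inner)
    then have "\<bar>n \<bullet> w\<bar> / norm n \<le> norm (M *v w)"
      using \<open>norm n > 0\<close> by (simp add: pos_divide_le_eq mult.commute)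
    then show "\<bar>(n /\<^sub>R norm n) \<bullet> w\<bar> \<le> norm ((L - Q) *v w)"
      by (simp add: M_def abs_mult divide_inverse mult.commute)
  qed
qed

lemma simplex_vol_le_slab:
  fixes xs :: "nat \<Rightarrow> real^'n"
  assumes "norm u = 1" "t > 0"
    and "\<forall>i\<le>CARD('n). norm (xs i - xs 0) \<le> 1 \<and> \<bar>u \<bullet> (xs i - xs 0)\<bar> \<le> t"
  shows "simplex_vol xs \<le> 3 * t * measure lebesgue (cball (0::real^'n) 2)"
proof -
  define S where "S = {y. \<bar>u \<bullet> y\<bar> \<le> t \<and> norm y \<le> 1}"
  have "compact S" unfolding S_def by (rule compact_slab)
  moreover have "convex S"
    unfolding S_def slab_eq_Int_halfspaces
    by (simp add: convex_Int convex_halfspace_le convex_halfspace_ge)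
  moreover have "xs i \<in> (+) (xs 0) ` S" if "i \<le> CARD('n)" for i
    using assms(3) that unfolding S_def by (force intro: image_eqI[of _ _ "xs i - xs 0"])
  ultimately have "convex hull (xs ` {0..CARD('n)}) \<subseteq> (+) (xs 0) ` S"
    by (intro hull_minimal) (auto intro: convex_translation)
  moreover have "convex hull (xs ` {0..CARD('n)}) \<in> sets lebesgue"
    by (intro fmeasurableD lmeasurable_compact compact_convex_hull finite_imp_compact) simp
  ultimately have "simplex_vol xs \<le> measure lebesgue ((+) (xs 0) ` S)"
    unfolding simplex_vol_def
    using \<open>compact S\<close> by (intro measure_mono_fmeasurable lmeasurable_compact compact_translation)
  also have "\<dots> \<le> 3 * t * measure lebesgue (cball (0::real^'n) 2)"
    unfolding S_def measure_translation by (rule measure_slab_le[OF assms(1,2)])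
  finally show ?thesis .
qed

lemma proper_diffeo_iff_det_affine_interpolant:
  fixes \<Phi> :: "real^'n \<Rightarrow> real^'n" and xs :: "nat \<Rightarrow> real^'n"
  assumes dd: "distorted_diffeo \<delta> \<Phi>" and \<delta>: "0 < \<delta>" "\<delta> < distortion_threshold CARD('n)"
    and diam: "\<forall>i\<le>CARD('n). \<forall>j\<le>CARD('n). dist (xs i) (xs j) \<le> 1"
    and vol: "6 * motion_error_const CARD('n) * \<delta> * measure lebesgue (cball (0::real^'n) 2) < simplex_vol xs"
    and interp: "\<forall>i\<le>CARD('n). L *v xs i + b = \<Phi> (xs i)"
  shows "proper_diffeo \<Phi> \<longleftrightarrow> det L > 0"
proof -
  define t where "t = motion_error_const CARD('n) * \<delta> * 2"
  have "t > 0" using \<delta> motion_error_const_pos[of "CARD('n)"] by (simp add: t_def)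
  obtain Q where Q: "orthogonal_matrix Q"
    "\<And>x. norm (x - xs 0) \<le> 2 \<Longrightarrow> norm (\<Phi> x - \<Phi> (xs 0) - Q *v (x - xs 0)) \<le> t"
    "det Q > 0 \<longleftrightarrow> det (jac \<Phi> (xs 0)) > 0"
    using distorted_diffeo_near_orthogonal[OF dd \<delta>, of 2 "xs 0"] unfolding t_def by auto
  have close: "norm (xs i - xs 0) \<le> 1" if "i \<le> CARD('n)" for i
    using diam that by (simp add: dist_norm)
  have err: "norm ((L - Q) *v (xs i - xs 0)) \<le> t" if "i \<le> CARD('n)" for i
  proof -
    have "L *v xs i = \<Phi> (xs i) - b" "L *v xs 0 = \<Phi> (xs 0) - b"
      using interp[rule_format, OF that] interp[rule_format, of 0] by (simp_all add: eq_diff_eq)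
    then have "(L - Q) *v (xs i - xs 0) = \<Phi> (xs i) - \<Phi> (xs 0) - Q *v (xs i - xs 0)"
      by (simp add: matrix_vector_mult_diff_rdistrib matrix_vector_mult_diff_distrib)
    then show ?thesis using Q(2) close[OF that] by simp
  qed
  have "det (Q + s *\<^sub>R (L - Q)) \<noteq> 0" if s: "s \<in> {0..1}" for s
  proof
    assume "det (Q + s *\<^sub>R (L - Q)) = 0"
    then obtain u where "norm u = 1" "\<And>w. \<bar>u \<bullet> w\<bar> \<le> norm ((L - Q) *v w)"
      using singular_on_segment_obtains_direction[OF Q(1)] s by auto
    then have "simplex_vol xs \<le> 3 * t * measure lebesgue (cball (0::real^'n) 2)"
      using close err \<open>t > 0\<close> by (intro simplex_vol_le_slab) (auto intro: order_trans)
    then show False using vol by (simp add: t_def)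
  qed
  then have "det Q > 0 \<longleftrightarrow> det L > 0"
    using det_sign_eq_if_segment_nonsingular[of Q L] by simp
  then show ?thesis
    using Q(3) proper_diffeo_iff_det_jac_pos[OF dd] \<delta> by simp
qed

theorem theorem4p1:
  assumes "CARD('n) \<ge> 2"
  shows
  "(\<exists>c C'. c > 0 \<and> C' > 0 \<and>
      (\<forall>\<epsilon> (\<Phi> :: real^'n \<Rightarrow> real^'n) z r.
         0 < \<epsilon> \<and> \<epsilon> < c \<and> distorted_diffeo \<epsilon> \<Phi> \<and> r > 0 \<longrightarrow>
         (\<exists>A. euclidean_motion A \<and> (\<forall>x\<in>ball z r. norm (\<Phi> x - A x) \<le> C' * \<epsilon> * r)
              \<and> (proper_motion A \<longleftrightarrow> proper_diffeo \<Phi>))))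
   \<and>
   (\<exists>c0 c'. c0 > 0 \<and> c' > 0 \<and>
      (\<forall>\<delta> (\<Phi> :: real^'n \<Rightarrow> real^'n) \<eta> (xs :: nat \<Rightarrow> real^'n) L b.
         0 < \<delta> \<and> \<delta> < c0 \<and> distorted_diffeo \<delta> \<Phi> \<and> 0 < \<eta> \<and> \<eta> < 1
         \<and> (\<forall>i\<le>CARD('n). \<forall>j\<le>CARD('n). dist (xs i) (xs j) \<le> 1)
         \<and> simplex_vol xs \<ge> \<eta> ^ CARD('n)
         \<and> \<delta> < c' * \<eta> ^ CARD('n)
         \<and> (\<forall>i\<le>CARD('n). L *v xs i + b = \<Phi> (xs i))
         \<longrightarrow> (proper_diffeo \<Phi> \<longleftrightarrow> det L > 0)))"
proof -
  define c' where
    "c' = 1 / (6 * motion_error_const CARD('n) * (measure lebesgue (cball (0::real^'n) 2) + 1))"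
  have c': "c' > 0" by (simp add: c'_def motion_error_const_pos add_nonneg_pos)
  have small_volume: "6 * motion_error_const CARD('n) * \<delta> * measure lebesgue (cball (0::real^'n) 2) < v"
    if "0 < \<delta>" "\<delta> < c' * \<eta>" "\<eta> \<le> v" for \<delta> \<eta> v
  proof -
    let ?C = "motion_error_const CARD('n)" and ?m = "measure lebesgue (cball (0::real^'n) 2)"
    have C: "?C > 0" by (simp add: motion_error_const_pos)
    have m: "?m + 1 > 0" by (simp add: add_nonneg_pos)
    have "6 * ?C * \<delta> * ?m \<le> 6 * ?C * (?m + 1) * \<delta>" using that C by simp
    also have "\<dots> < 6 * ?C * (?m + 1) * (c' * \<eta>)"
      using that C m by (intro mult_strict_left_mono) auto
    also have "\<dots> = \<eta>" using C m by (simp add: c'_def)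
    finally show ?thesis using that by linarith
  qed
  show ?thesis
  proof (rule conjI, goal_cases)
    case 1
    show ?case
      by (rule exI[of _ "distortion_threshold CARD('n)"], rule exI[of _ "motion_error_const CARD('n)"])
        (auto intro!: distorted_diffeo_near_euclidean_motion distortion_threshold_pos
          motion_error_const_pos)
  next
    case 2
    show ?case
      by (rule exI[of _ "distortion_threshold CARD('n)"], rule exI[of _ c'])
        (intro conjI allI impI distortion_threshold_pos c', elim conjE,
          rule proper_diffeo_iff_det_affine_interpolant[OF _ _ _ _ small_volume], auto)
  qed
qed

end
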